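(* Let $\mathcal I=\mathbb R^d$ with the standard inner product, let $\mathcal G$ be a compact Abelian group with normalized Haar measure $dg$, acting on $\mathcal I$ by a unitary representation $I\mapsto gI$, and let $\mathcal T$ be the unit sphere of $\mathcal I$. For $I\in\mathcal I$ let $\rho_I$ be the law of $g\mapsto gI$ on $(\mathcal G,dg)$, and for $t\in\mathcal T$ let $\rho_I^t$ be the law on $\mathbb R$ of $g\mapsto\langle gI,t\rangle$ (the pushforward of $\rho_I$ under $I\mapsto\langle I,t\rangle$). Define $\mu(I)(t)=\mu^t(I)$ to be the cumulative distribution function of $\rho_I^t$, i.e. $\mu^t(I)(b)=\rho_I^t((-\infty,b])$ for $b\in\mathbb R$. Then for all $I\in\mathcal I$, $t\in\mathcal T$, $$\mu^t(I)(b)=\int \eta_b(\langle I,gt\rangle)\,dg,\qquad b\in\mathbb R,$$ where $\eta_b(a)=H(b-a)$ and $H$ is the Heaviside step function. Moreover, for all $I,I'\in\mathcal I$, $$I\sim I'\iff \mu(I)=\mu(I').$$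
   Context: $I\sim I'$ means there exists $g\in\mathcal G$ with $gI=I'$. $H(x)=1$ for $x\ge 0$ and $H(x)=0$ for $x<0$. *)

theory Defs
  imports "HOL-Analysis.Analysis" "HOL-Probability.Probability"
begin

definition heaviside :: "real \<Rightarrow> real" where
  "heaviside x = (if x \<ge> 0 then 1 else 0)"

definition eta :: "real \<Rightarrow> real \<Rightarrow> real" where
  "eta b a = heaviside (b - a)"

definition normalized_haar :: "'g::topological_ab_group_add measure \<Rightarrow> bool" where
  "normalized_haar M \<longleftrightarrow> prob_space M \<and> sets M = sets borel \<and>
     (\<forall>g. distr M borel (\<lambda>h. g + h) = M)"

definition unitary_rep :: "('g::topological_ab_group_add \<Rightarrow> real^'n \<Rightarrow> real^'n) \<Rightarrow> bool" where
  "unitary_rep act \<longleftrightarrow>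
     (\<forall>g. linear (act g)) \<and>
     (\<forall>g x y. inner (act g x) (act g y) = inner x y) \<and>
     (\<forall>g h. act (g + h) = act g \<circ> act h) \<and>
     act 0 = id \<and>
     (\<forall>x. continuous_on UNIV (\<lambda>g. act g x))"

definition orbit_law :: "'g measure \<Rightarrow> ('g \<Rightarrow> real^'n \<Rightarrow> real^'n) \<Rightarrow> real^'n \<Rightarrow> (real^'n) measure" where
  "orbit_law M act I = distr M borel (\<lambda>g. act g I)"

definition proj_law :: "'g measure \<Rightarrow> ('g \<Rightarrow> real^'n \<Rightarrow> real^'n) \<Rightarrow> real^'n \<Rightarrow> real^'n \<Rightarrow> real measure" where
  "proj_law M act I t = distr (orbit_law M act I) borel (\<lambda>x. inner x t)"

definition mu :: "'g measure \<Rightarrow> ('g \<Rightarrow> real^'n \<Rightarrow> real^'n) \<Rightarrow> real^'n \<Rightarrow> real^'n \<Rightarrow> real \<Rightarrow> real" where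
  "mu M act I t b = measure (proj_law M act I t) {..b}"

definition orbit_equiv :: "('g \<Rightarrow> real^'n \<Rightarrow> real^'n) \<Rightarrow> real^'n \<Rightarrow> real^'n \<Rightarrow> bool" where
  "orbit_equiv act I I' \<longleftrightarrow> (\<exists>g. act g I = I')"

end

theory Submission imports Defs begin

text \<open>Since Haar measure on an abelian group is invariant under \<open>g \<mapsto> -g\<close> and
  \<open>\<langle>gI, t\<rangle> = \<langle>I, (-g) t\<rangle>\<close>, the two descriptions of \<open>\<mu>\<^sup>t(I)\<close> agree; by translation invariance
  \<open>\<mu>(I)\<close> only depends on the orbit of \<open>I\<close>. Conversely, every nonempty open subset of a compact
  group has positive Haar measure, so the law of \<open>\<langle>gI, t\<rangle>\<close> charges every neighbourhood of
  \<open>\<langle>I, t\<rangle>\<close>. Taking \<open>t = I/\<parallel>I\<parallel>\<close>, equal laws force \<open>\<parallel>I\<parallel> \<le> \<parallel>I'\<parallel>\<close> and, once the norms agree,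
  elements of the orbit of \<open>I'\<close> arbitrarily close to \<open>I\<close>; the orbit is compact, hence contains \<open>I\<close>.\<close>

lemma normalized_haarD:
  fixes M :: "'g::topological_ab_group_add measure"
  assumes "normalized_haar M"
  shows "prob_space M" "sets M = sets borel" "space M = UNIV"
    "distr M borel ((+) g) = M"
proof -
  show "prob_space M" "sets M = sets borel" "distr M borel ((+) g) = M"
    using assms unfolding normalized_haar_def by auto
  then show "space M = UNIV"
    using sets_eq_imp_space_eq by force
qed

lemma normalized_haar_measurable_continuous:
  fixes M :: "'g::topological_ab_group_add measure" and f :: "'g \<Rightarrow> 'b::topological_space"
  assumes "normalized_haar M" "continuous_on UNIV f"
  shows "f \<in> borel_measurable M"
  by (subst measurable_cong_sets[OF normalized_haarD(2)[OF assms(1)] refl])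
    (rule borel_measurable_continuous_onI[OF assms(2)])

lemma normalized_haar_translate_measurable:
  fixes M :: "'g::topological_ab_group_add measure"
  assumes "normalized_haar M"
  shows "(+) g \<in> borel_measurable M"
  by (intro normalized_haar_measurable_continuous[OF assms] continuous_intros)

lemma normalized_haar_measure_translate:
  fixes M :: "'g::topological_ab_group_add measure"
  assumes H: "normalized_haar M" and A: "A \<in> sets borel"
  shows "measure M ((+) g -` A) = measure M A"
proof -
  have "measure M A = measure (distr M borel ((+) g)) A"
    by (simp only: normalized_haarD(4)[OF H])
  also have "\<dots> = measure M ((+) g -` A)"
    using measure_distr[OF normalized_haar_translate_measurable[OF H] A] normalized_haarD(3)[OF H]
    by simp
  finally show ?thesis by simp
qed

lemma normalized_haar_nn_integral_translate:
  fixes M :: "'g::topological_ab_group_add measure" and f :: "'g \<Rightarrow> ennreal"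
  assumes H: "normalized_haar M" and f: "f \<in> borel_measurable borel"
  shows "(\<integral>\<^sup>+h. f (g + h) \<partial>M) = (\<integral>\<^sup>+h. f h \<partial>M)"
proof -
  have "(\<integral>\<^sup>+h. f h \<partial>M) = (\<integral>\<^sup>+h. f h \<partial>distr M borel ((+) g))"
    by (simp only: normalized_haarD(4)[OF H])
  also have "\<dots> = (\<integral>\<^sup>+h. f (g + h) \<partial>M)"
    using f by (simp add: nn_integral_distr[OF normalized_haar_translate_measurable[OF H]])
  finally show ?thesis by simp
qed

text \<open>By Fubini both sides equal the double integral of \<open>1\<^sub>A (h - g)\<close>. The product of the Borel
  \<sigma>-algebras may be smaller than the Borel \<sigma>-algebra of the product, hence the hypothesis
  on the difference set.\<close>
lemma normalized_haar_emeasure_uminus: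
  fixes M :: "'g::topological_ab_group_add measure"
  assumes H: "normalized_haar M" and A: "A \<in> sets borel"
    and diff: "{x. fst x - snd x \<in> A} \<in> sets (M \<Otimes>\<^sub>M M)"
  shows "emeasure M (uminus -` A) = emeasure M A"
proof -
  interpret P: prob_space M by (rule normalized_haarD(1)[OF H])
  interpret PP: pair_sigma_finite M M
    by (simp add: pair_sigma_finite_def P.sigma_finite_measure_axioms)
  have space: "space M = UNIV" by (rule normalized_haarD(3)[OF H])
  have A_M: "A \<in> sets M"
    using A normalized_haarD(2)[OF H] by simp
  have "uminus \<in> borel_measurable M"
    by (intro normalized_haar_measurable_continuous[OF H] continuous_intros)
  then have neg_A_M: "uminus -` A \<in> sets M"
    using measurable_sets[OF _ A, of uminus M] space by simp
  let ?f = "indicator A :: 'g \<Rightarrow> ennreal"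
  have neg_f: "(\<lambda>g. ?f (- g)) \<in> borel_measurable borel"
    by (rule measurable_compose[OF _ borel_measurable_indicator[OF A]])
      (intro borel_measurable_continuous_onI continuous_intros)
  have "(\<lambda>(h, g). ?f (h - g)) = indicator {x. fst x - snd x \<in> A}"
    by (auto simp: indicator_def)
  then have diff_f: "(\<lambda>(h, g). ?f (h - g)) \<in> borel_measurable (M \<Otimes>\<^sub>M M)"
    using diff by simp
  have inner_neg: "(\<integral>\<^sup>+g. ?f (h - g) \<partial>M) = (\<integral>\<^sup>+g. ?f (- g) \<partial>M)" for h
    using normalized_haar_nn_integral_translate[OF H neg_f, of "- h"] by (simp add: algebra_simps)
  have inner_pos: "(\<integral>\<^sup>+h. ?f (h - g) \<partial>M) = (\<integral>\<^sup>+h. ?f h \<partial>M)" for g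
    using normalized_haar_nn_integral_translate[OF H borel_measurable_indicator[OF A], of "- g"]
    by (simp add: algebra_simps)
  have "emeasure M (uminus -` A) = (\<integral>\<^sup>+g. ?f (- g) \<partial>M)"
    using nn_integral_indicator[OF neg_A_M] by (simp add: indicator_vimage)
  also have "\<dots> = (\<integral>\<^sup>+h. (\<integral>\<^sup>+g. ?f (h - g) \<partial>M) \<partial>M)"
    by (simp only: inner_neg nn_integral_const P.emeasure_space_1 mult_1_right)
  also have "\<dots> = (\<integral>\<^sup>+g. (\<integral>\<^sup>+h. ?f (h - g) \<partial>M) \<partial>M)"
    by (rule PP.Fubini'[OF diff_f, symmetric])
  also have "\<dots> = (\<integral>\<^sup>+g. emeasure M A \<partial>M)"
    by (simp only: inner_pos nn_integral_indicator[OF A_M])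
  also have "\<dots> = emeasure M A"
    by (simp only: nn_integral_const P.emeasure_space_1 mult_1_right)
  finally show ?thesis .
qed

lemma normalized_haar_open_pos:
  fixes M :: "'g::topological_ab_group_add measure"
  assumes H: "normalized_haar M" and C: "compact (UNIV :: 'g set)"
    and U: "open U" "U \<noteq> {}"
  shows "measure M U > 0"
proof (rule ccontr)
  assume "\<not> measure M U > 0"
  then have U0: "measure M U = 0"
    using measure_nonneg[of M U] by linarith
  interpret P: prob_space M by (rule normalized_haarD(1)[OF H])
  obtain u where "u \<in> U" using U(2) by blast
  have open_translate: "open ((+) g -` U)" for g
    by (rule open_vimage[OF U(1)]) (intro continuous_intros)
  have "UNIV \<subseteq> (\<Union>g. (+) g -` U)"
  proof
    fix x :: 'g
    have "x \<in> (+) (u - x) -` U" using \<open>u \<in> U\<close> by simp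
    then show "x \<in> (\<Union>g. (+) g -` U)" by blast
  qed
  then obtain D where D: "finite D" "UNIV \<subseteq> (\<Union>g\<in>D. (+) g -` U)"
    by (rule compactE_image[OF C, of UNIV "\<lambda>g. (+) g -` U", OF open_translate]) auto
  have translate_M: "(+) g -` U \<in> sets M" for g
    using borel_open[OF open_translate] normalized_haarD(2)[OF H] by simp
  have "(\<Union>g\<in>D. (+) g -` U) = space M"
    using D(2) normalized_haarD(3)[OF H] by blast
  then have "1 = measure M (\<Union>g\<in>D. (+) g -` U)"
    by (simp add: P.prob_space)
  also have "\<dots> \<le> (\<Sum>g\<in>D. measure M ((+) g -` U))"
    by (rule measure_UNION_le[OF D(1) translate_M])
  also have "\<dots> = 0"
    using normalized_haar_measure_translate[OF H borel_open[OF U(1)]] U0 by simp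
  finally show False by simp
qed

lemma unitary_repD:
  fixes act :: "'g::topological_ab_group_add \<Rightarrow> real^'n \<Rightarrow> real^'n"
  assumes "unitary_rep act"
  shows "linear (act g)" "inner (act g x) (act g y) = inner x y"
    "act (g + h) x = act g (act h x)" "act 0 x = x"
    "continuous_on UNIV (\<lambda>g. act g x)"
  using assms unfolding unitary_rep_def by auto

lemma unitary_rep_norm:
  assumes "unitary_rep act"
  shows "norm (act g x) = norm x"
  using unitary_repD(2)[OF assms] by (simp add: norm_eq_sqrt_inner)

lemma unitary_rep_inner_adjoint:
  assumes R: "unitary_rep act"
  shows "inner (act g x) y = inner x (act (- g) y)"
proof -
  have "inner (act g x) y = inner (act g x) (act g (act (- g) y))"
    using unitary_repD(3)[OF R, of g "- g"] unitary_repD(4)[OF R] by simp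
  then show ?thesis using unitary_repD(2)[OF R] by simp
qed

lemma unitary_rep_inner_diff:
  assumes R: "unitary_rep act"
  shows "inner x (act (g - h) y) = inner (act (- g) x) (act (- h) y)"
  using unitary_rep_inner_adjoint[OF R, of "- g" x "act (- h) y"] unitary_repD(3)[OF R, of g "- h" y]
  by simp

lemma unitary_rep_continuous_inner:
  assumes "unitary_rep act"
  shows "continuous_on UNIV (\<lambda>g. inner (act g x) y)"
  by (intro continuous_intros unitary_repD(5)[OF assms])

lemma unitary_rep_orbit_closed:
  assumes "unitary_rep act" and "compact (UNIV :: 'g::topological_ab_group_add set)"
  shows "closed (range (\<lambda>g::'g. act g x))"
  by (intro compact_imp_closed compact_continuous_image unitary_repD(5)[OF assms(1)] assms(2))

lemma mu_eq_measure:
  fixes M :: "'g::topological_ab_group_add measure" and act :: "'g \<Rightarrow> real^'n \<Rightarrow> real^'n"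
  assumes H: "normalized_haar M" and R: "unitary_rep act"
  shows "mu M act I t b = measure M {g. inner (act g I) t \<le> b}"
proof -
  have orbit: "(\<lambda>g. act g I) \<in> borel_measurable M"
    by (rule normalized_haar_measurable_continuous[OF H unitary_repD(5)[OF R]])
  have proj: "(\<lambda>x. inner x t) \<in> borel_measurable borel"
    by (intro borel_measurable_continuous_onI continuous_intros)
  have "mu M act I t b = measure (distr M borel (\<lambda>g. inner (act g I) t)) {..b}"
    unfolding mu_def proj_law_def orbit_law_def by (simp add: distr_distr[OF proj orbit] comp_def)
  also have "\<dots> = measure M {g. inner (act g I) t \<le> b}"
    using measurable_comp[OF orbit proj] normalized_haarD(3)[OF H]
    by (subst measure_distr) (auto simp: vimage_def comp_def)
  finally show ?thesis .
qed

lemma mu_act_eq: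
  fixes M :: "'g::topological_ab_group_add measure" and act :: "'g \<Rightarrow> real^'n \<Rightarrow> real^'n"
  assumes H: "normalized_haar M" and R: "unitary_rep act"
  shows "mu M act (act g I) t = mu M act I t"
proof
  fix b
  define B where "B = {h. inner (act h I) t \<le> b}"
  have B: "B \<in> sets borel"
    using borel_measurable_continuous_onI[OF unitary_rep_continuous_inner[OF R]]
    unfolding B_def by measurable
  have "act (g + h) I = act h (act g I)" for h
    using unitary_repD(3)[OF R, of h g I] by (simp add: add.commute)
  then have "(+) g -` B = {h. inner (act h (act g I)) t \<le> b}"
    unfolding B_def by auto
  then show "mu M act (act g I) t b = mu M act I t b"
    using normalized_haar_measure_translate[OF H B, of g]
    by (simp add: mu_eq_measure[OF H R] B_def)
qed

lemma mu_eq_integral_eta: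
  fixes M :: "'g::topological_ab_group_add measure" and act :: "'g \<Rightarrow> real^'n \<Rightarrow> real^'n"
  assumes H: "normalized_haar M" and R: "unitary_rep act"
  shows "mu M act I t b = (\<integral>g. eta b (inner I (act g t)) \<partial>M)"
proof -
  interpret P: prob_space M by (rule normalized_haarD(1)[OF H])
  define A where "A = {g. inner I (act g t) \<le> b}"
  have A: "A \<in> sets borel"
    using borel_measurable_continuous_onI[OF unitary_rep_continuous_inner[OF R, of t I]]
    unfolding A_def by (simp add: inner_commute) measurable
  have act_M: "(\<lambda>g. act (- g) x) \<in> borel_measurable M" for x
    by (intro normalized_haar_measurable_continuous[OF H] continuous_on_compose2[OF unitary_repD(5)[OF R]]
        continuous_intros) auto
  have "{x. fst x - snd x \<in> A} = {x. inner (act (- fst x) I) (act (- snd x) t) \<le> b}"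
    unfolding A_def by (simp add: unitary_rep_inner_diff[OF R])
  also have "\<dots> = (\<lambda>x. inner (act (- fst x) I) (act (- snd x) t)) -` {..b} \<inter> space (M \<Otimes>\<^sub>M M)"
    by (auto simp: space_pair_measure normalized_haarD(3)[OF H])
  also have "\<dots> \<in> sets (M \<Otimes>\<^sub>M M)"
    by (intro measurable_sets[OF _ atMost_borel] borel_measurable_inner
        measurable_compose[OF measurable_fst act_M] measurable_compose[OF measurable_snd act_M])
  finally have "emeasure M (uminus -` A) = emeasure M A"
    by (rule normalized_haar_emeasure_uminus[OF H A])
  moreover have "{g. inner (act g I) t \<le> b} = uminus -` A"
    unfolding A_def by (simp add: unitary_rep_inner_adjoint[OF R])
  moreover have "(\<lambda>g. eta b (inner I (act g t))) = indicator A"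
    by (auto simp: eta_def heaviside_def A_def indicator_def)
  ultimately show ?thesis
    using A normalized_haarD(2)[OF H] by (simp add: mu_eq_measure[OF H R] measure_def)
qed

text \<open>Equal distributions force the orbit of \<open>K\<close> to reach as far in direction \<open>t\<close> as
  \<open>J\<close> itself: otherwise the open neighbourhood of \<open>0\<close> where \<open>\<langle>gJ, t\<rangle>\<close> stays close to
  \<open>\<langle>J, t\<rangle>\<close>, which has positive Haar measure, would separate the two laws.\<close>
lemma mu_eq_imp_orbit_inner_approx:
  fixes M :: "'g::topological_ab_group_add measure" and act :: "'g \<Rightarrow> real^'n \<Rightarrow> real^'n"
  assumes H: "normalized_haar M" and R: "unitary_rep act" and C: "compact (UNIV :: 'g set)"
    and eq: "mu M act J t = mu M act K t" and e: "e > 0"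
  shows "\<exists>g. inner (act g K) t > inner J t - e"
proof (rule ccontr)
  assume below: "\<not> ?thesis"
  interpret P: prob_space M by (rule normalized_haarD(1)[OF H])
  define U where "U = {g. inner (act g J) t > inner J t - e}"
  have "open U"
    unfolding U_def using open_Collect_less[OF continuous_on_const unitary_rep_continuous_inner[OF R]]
    by simp
  moreover have "0 \<in> U"
    unfolding U_def using unitary_repD(4)[OF R] e by simp
  ultimately have pos: "measure M U > 0"
    using normalized_haar_open_pos[OF H C] by blast
  have U_M: "U \<in> sets M"
    using \<open>open U\<close> normalized_haarD(2)[OF H] by simp
  have "{g. inner (act g J) t \<le> inner J t - e} = space M - U"
    using normalized_haarD(3)[OF H] by (auto simp: U_def)
  then have "mu M act J t (inner J t - e) = 1 - measure M U"
    using mu_eq_measure[OF H R] P.prob_compl[OF U_M] by simp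
  moreover have "{g. inner (act g K) t \<le> inner J t - e} = space M"
    using below normalized_haarD(3)[OF H] by (auto simp: not_less)
  then have "mu M act K t (inner J t - e) = 1"
    using mu_eq_measure[OF H R] P.prob_space by simp
  ultimately show False
    using eq pos by simp
qed

lemma inner_sgn_self: "inner x (sgn x) = norm (x :: 'a::real_inner)"
  by (cases "x = 0") (simp_all add: sgn_div_norm power2_norm_eq_inner[symmetric] power2_eq_square)

lemma mu_eq_imp_norm_le:
  fixes M :: "'g::topological_ab_group_add measure" and act :: "'g \<Rightarrow> real^'n \<Rightarrow> real^'n"
  assumes H: "normalized_haar M" and R: "unitary_rep act" and C: "compact (UNIV :: 'g set)"
    and eq: "mu M act J (sgn J) = mu M act K (sgn J)"
  shows "norm J \<le> norm K"
proof (rule field_le_epsilon)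
  fix e :: real assume "e > 0"
  then obtain g where g: "inner (act g K) (sgn J) > norm J - e"
    using mu_eq_imp_orbit_inner_approx[OF H R C eq] by (auto simp: inner_sgn_self)
  have "inner (act g K) (sgn J) \<le> norm (act g K) * norm (sgn J)"
    by (rule norm_cauchy_schwarz)
  also have "\<dots> \<le> norm K"
    by (simp add: unitary_rep_norm[OF R] norm_sgn)
  finally show "norm J \<le> norm K + e" using g by simp
qed

lemma mu_eq_imp_norm_eq:
  fixes M :: "'g::topological_ab_group_add measure" and act :: "'g \<Rightarrow> real^'n \<Rightarrow> real^'n"
  assumes H: "normalized_haar M" and R: "unitary_rep act" and C: "compact (UNIV :: 'g set)"
    and eq: "\<forall>t \<in> sphere 0 1. mu M act J t = mu M act K t"
  shows "norm J = norm K"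
proof -
  have "norm J \<le> norm K" if "J \<noteq> 0" "\<forall>t \<in> sphere 0 1. mu M act J t = mu M act K t" for J K
    using mu_eq_imp_norm_le[OF H R C] that by (simp add: norm_sgn)
  from this[of J K] this[of K J] eq show ?thesis
    by (cases "J = 0"; cases "K = 0") auto
qed

text \<open>With \<open>\<parallel>gK\<parallel> = \<parallel>J\<parallel> = r\<close> one has \<open>\<parallel>gK - J\<parallel>\<^sup>2 = 2r(r - \<langle>gK, sgn J\<rangle>)\<close>, so
  \<open>J\<close> lies in the closure of the orbit of \<open>K\<close>, which is compact.\<close>
lemma mu_eq_imp_in_orbit:
  fixes M :: "'g::topological_ab_group_add measure" and act :: "'g \<Rightarrow> real^'n \<Rightarrow> real^'n"
  assumes H: "normalized_haar M" and R: "unitary_rep act" and C: "compact (UNIV :: 'g set)"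
    and J: "J \<noteq> 0" and eq: "mu M act J (sgn J) = mu M act K (sgn J)"
    and norm_eq: "norm K = norm J"
  shows "\<exists>g. act g K = J"
proof -
  define r where "r = norm J"
  have r: "r > 0" using J by (simp add: r_def)
  have "J \<in> closure (range (\<lambda>g. act g K))"
    unfolding closure_approachable
  proof (intro allI impI)
    fix e :: real assume e: "e > 0"
    then obtain g where g: "inner (act g K) (sgn J) > r - e\<^sup>2 / (2 * r)"
      using mu_eq_imp_orbit_inner_approx[OF H R C eq, of "e\<^sup>2 / (2 * r)"] r
      by (auto simp: inner_sgn_self r_def)
    have "r * r - e\<^sup>2 / 2 = r * (r - e\<^sup>2 / (2 * r))"
      using r by (simp add: field_simps)
    also have "\<dots> < r * inner (act g K) (sgn J)"
      using g r by simp
    also have "\<dots> = inner (act g K) J"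
      using J by (simp add: sgn_div_norm r_def)
    finally have "inner (act g K) J > r * r - e\<^sup>2 / 2" .
    moreover have "(dist (act g K) J)\<^sup>2 = (norm (act g K))\<^sup>2 + (norm J)\<^sup>2 - 2 * inner (act g K) J"
      by (simp add: dist_norm power2_norm_eq_inner inner_diff algebra_simps inner_commute)
    ultimately have "(dist (act g K) J)\<^sup>2 < e\<^sup>2"
      using unitary_rep_norm[OF R, of g K] norm_eq by (simp add: r_def power2_eq_square)
    then have "dist (act g K) J < e"
      using e by (simp add: power_less_imp_less_base)
    then show "\<exists>y\<in>range (\<lambda>g. act g K). dist y J < e" by blast
  qed
  then show ?thesis
    using closure_closed[OF unitary_rep_orbit_closed[OF R C]] by auto
qed

theorem theorem5:
  fixes M :: "'g::{topological_ab_group_add, t2_space} measure"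
    and act :: "'g \<Rightarrow> real^'n \<Rightarrow> real^'n"
  assumes "compact (UNIV :: 'g set)"
    and "normalized_haar M"
    and "unitary_rep act"
  shows "(\<forall>I t b. t \<in> sphere 0 1 \<longrightarrow>
            mu M act I t b = (\<integral>g. eta b (inner I (act g t)) \<partial>M))
       \<and> (\<forall>I I'. orbit_equiv act I I' \<longleftrightarrow>
            (\<forall>t \<in> sphere 0 1. mu M act I t = mu M act I' t))"
proof (intro conjI allI impI)
  fix I t b
  show "mu M act I t b = (\<integral>g. eta b (inner I (act g t)) \<partial>M)"
    by (rule mu_eq_integral_eta[OF assms(2,3)])
next
  note H = assms(2) and R = assms(3) and C = assms(1)
  fix I I' :: "real^'n"
  show "orbit_equiv act I I' \<longleftrightarrow> (\<forall>t \<in> sphere 0 1. mu M act I t = mu M act I' t)"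
  proof
    assume "orbit_equiv act I I'"
    then show "\<forall>t \<in> sphere 0 1. mu M act I t = mu M act I' t"
      using mu_act_eq[OF H R] by (auto simp: orbit_equiv_def)
  next
    assume eq: "\<forall>t \<in> sphere 0 1. mu M act I t = mu M act I' t"
    have norm_eq: "norm I = norm I'"
      by (rule mu_eq_imp_norm_eq[OF H R C eq])
    show "orbit_equiv act I I'"
    proof (cases "I' = 0")
      case True
      then show ?thesis
        using norm_eq unitary_repD(4)[OF R] by (auto simp: orbit_equiv_def)
    next
      case False
      then show ?thesis
        using mu_eq_imp_in_orbit[OF H R C False _ norm_eq] eq
        by (auto simp: orbit_equiv_def norm_sgn)
    qed
  qed
qed

end
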